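(* Let $n\ge 2$, let $P\subset B_\infty^d(1)$ with $|P|=n$, and let $\sigma:P\to\{-1,+1\}$. Let $\rho$ be an integer with $\rho+1\ge 2e^2d(\sqrt{3\log n}+3)+\log n+2d$, and define the polynomial \[\mathcal{P}_{P,\rho}(x)=\sum_{k=0}^{\rho}\frac{2^k}{k!}\sum_{p\in P}\sigma(p)e^{-\|p\|^2}\langle p,x\rangle^k .\] Then for every $x\in B_\infty^d(\sqrt{3\log n}+3)$, \[\left|\sum_{p\in P}\sigma(p)e^{2\|p\|^2}e^{-\frac13\|x-3p\|^2}-e^{-\frac13\|x\|^2}\mathcal{P}_{P,\rho}(x)\right|\le 1.\]
   Context: $\log$ is the natural logarithm. $B_\infty^d(r)=\{x\in\mathbb{R}^d:|x_j|<r\text{ for all }j\}$. $\|\cdot\|$ is the Euclidean norm and $\langle\cdot,\cdot\rangle$ the standard inner product. *)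

theory Defs
  imports "HOL-Analysis.Analysis"
begin

definition box_inf :: "real \<Rightarrow> (real^'d) set" where
  "box_inf r = {x. \<forall>j. \<bar>x $ j\<bar> < r}"

definition poly_P :: "(real^'d) set \<Rightarrow> (real^'d \<Rightarrow> real) \<Rightarrow> int \<Rightarrow> real^'d \<Rightarrow> real" where
  "poly_P P sg rho x =
     (\<Sum>k=0..nat rho. (2 ^ k / fact k) *
        (\<Sum>p\<in>P. sg p * exp (- (norm p)\<^sup>2) * (inner p x) ^ k))"

end

theory Submission
  imports Defs
begin

text \<open>Expanding the square gives
  \<open>e^{2|p|^2} e^{-|x-3p|^2/3} = e^{-|x|^2/3} e^{-|p|^2} e^{2\<langle>p,x\<rangle>}\<close>, so the left-hand sum is
  \<open>e^{-|x|^2/3}\<close> times \<open>\<Sum>\<^sub>p \<sigma>(p) e^{-|p|^2} e^{2\<langle>p,x\<rangle>}\<close>, while the polynomial replaces each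
  \<open>e^{2\<langle>p,x\<rangle>}\<close> by its Taylor polynomial of degree \<open>\<rho>\<close>. With \<open>R = \<surd>(3 log n) + 3\<close> the
  boxes give \<open>|\<langle>p,x\<rangle>| \<le> dR\<close>, and the Taylor remainder of \<open>e^t\<close> after \<open>m\<close> terms is at most \<open>e^{-m} e^{e|t|}\<close>; the choice of \<open>\<rho>\<close> makes
  \<open>n e^{-(\<rho>+1)} e^{2e dR} \<le> 1\<close>.\<close>

lemma exp_minus_taylor_abs_le:
  fixes t :: real
  shows "\<bar>exp t - (\<Sum>k<m. t^k / fact k)\<bar> \<le> exp (- real m) * exp (exp 1 * \<bar>t\<bar>)"
proof -
  define u where "u = exp 1 * \<bar>t\<bar>"
  have exp_series: "(\<lambda>k. s^k / fact k) sums exp s" for s :: real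
    using exp_converges[of s] by (simp add: divide_inverse mult.commute)
  have tail_t: "(\<lambda>i. t^(i+m) / fact (i+m)) sums (exp t - (\<Sum>k<m. t^k / fact k))"
    using sums_split_initial_segment[OF exp_series] by simp
  have tail_u: "(\<lambda>i. exp (- real m) * (u^(i+m) / fact (i+m)))
      sums (exp (- real m) * (exp u - (\<Sum>k<m. u^k / fact k)))"
    using sums_mult[OF sums_split_initial_segment[OF exp_series]] by simp
  \<comment> \<open>\<open>e^{-m} e^{i+m} = e^i \<ge> 1\<close> absorbs the extra factor \<open>e^{i+m}\<close> of the majorant.\<close>
  have termwise: "\<bar>t^(i+m) / fact (i+m)\<bar> \<le> exp (- real m) * (u^(i+m) / fact (i+m))" for i
  proof -
    have e: "exp (- real m) * exp 1 ^ (i+m) = exp (real i)"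
      by (simp add: exp_of_nat_mult[symmetric] exp_add[symmetric] algebra_simps)
    have "\<bar>t^(i+m) / fact (i+m)\<bar> = 1 * (\<bar>t\<bar>^(i+m) / fact (i+m))" by (simp add: power_abs)
    also have "\<dots> \<le> exp (real i) * (\<bar>t\<bar>^(i+m) / fact (i+m))"
      by (rule mult_right_mono) auto
    also have "\<dots> = exp (- real m) * (u^(i+m) / fact (i+m))"
      unfolding u_def power_mult_distrib e[symmetric] by simp
    finally show ?thesis .
  qed
  have abs_summable: "summable (\<lambda>i. \<bar>t^(i+m) / fact (i+m)\<bar>)"
    by (rule summable_rabs_comparison_test[OF _ sums_summable[OF tail_u]]) (use termwise in blast)
  have "\<bar>exp t - (\<Sum>k<m. t^k / fact k)\<bar> = \<bar>\<Sum>i. t^(i+m) / fact (i+m)\<bar>"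
    using tail_t by (simp add: sums_iff)
  also have "\<dots> \<le> (\<Sum>i. \<bar>t^(i+m) / fact (i+m)\<bar>)" by (rule summable_rabs[OF abs_summable])
  also have "\<dots> \<le> (\<Sum>i. exp (- real m) * (u^(i+m) / fact (i+m)))"
    by (rule suminf_le[OF termwise abs_summable sums_summable[OF tail_u]])
  also have "\<dots> = exp (- real m) * (exp u - (\<Sum>k<m. u^k / fact k))"
    using tail_u by (simp add: sums_iff)
  also have "\<dots> \<le> exp (- real m) * exp u"
    unfolding u_def by (intro mult_left_mono) (auto intro!: sum_nonneg)
  finally show ?thesis unfolding u_def .
qed

lemma abs_inner_le_box_inf:
  fixes p x :: "real^'d"
  assumes "p \<in> box_inf a" and "x \<in> box_inf b"
  shows "\<bar>inner p x\<bar> \<le> real CARD('d) * (a * b)"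
proof -
  have "\<bar>p $ j * x $ j\<bar> \<le> a * b" for j
  proof -
    have "\<bar>p $ j\<bar> \<le> a" "\<bar>x $ j\<bar> \<le> b"
      using assms unfolding box_inf_def by (auto simp: less_imp_le)
    then show ?thesis unfolding abs_mult by (intro mult_mono) auto
  qed
  then have "(\<Sum>j\<in>UNIV. \<bar>p $ j * x $ j\<bar>) \<le> real CARD('d) * (a * b)"
    using sum_bounded_above[of UNIV "\<lambda>j. \<bar>p $ j * x $ j\<bar>" "a * b"] by simp
  then show ?thesis
    unfolding inner_vec_def inner_real_def by (rule order.trans[OF sum_abs])
qed

lemma exp_norm_diff_scaleR_3:
  fixes p x :: "'a::real_inner"
  shows "exp (2 * (norm p)\<^sup>2) * exp (- (1/3) * (norm (x - 3 *\<^sub>R p))\<^sup>2)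
    = exp (- (1/3) * (norm x)\<^sup>2) * (exp (- (norm p)\<^sup>2) * exp (2 * inner p x))"
proof -
  have "(norm (x - 3 *\<^sub>R p))\<^sup>2 = (norm x)\<^sup>2 - 6 * inner p x + 9 * (norm p)\<^sup>2"
    by (simp add: power2_norm_eq_inner inner_diff_left inner_diff_right inner_commute algebra_simps)
  then show ?thesis by (simp add: exp_add[symmetric] algebra_simps)
qed

lemma poly_P_eq_sum_taylor_exp:
  "poly_P P sg rho x
    = (\<Sum>p\<in>P. sg p * exp (- (norm p)\<^sup>2) * (\<Sum>k\<le>nat rho. (2 * inner p x)^k / fact k))"
proof -
  have "poly_P P sg rho x
      = (\<Sum>k\<le>nat rho. \<Sum>p\<in>P. sg p * exp (- (norm p)\<^sup>2) * ((2 * inner p x)^k / fact k))"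
    unfolding poly_P_def atLeast0AtMost
    by (simp add: sum_distrib_left power_mult_distrib algebra_simps)
  then show ?thesis
    by (subst (asm) sum.swap) (simp add: sum_distrib_left)
qed

lemma abs_sum_signed_weighted_le:
  assumes "\<forall>p\<in>P. sg p \<in> {-1, 1}" and "\<forall>p\<in>P. \<bar>w p\<bar> \<le> 1" and "\<forall>p\<in>P. \<bar>f p\<bar> \<le> B"
  shows "\<bar>\<Sum>p\<in>P. sg p * w p * f p\<bar> \<le> real (card P) * (B :: real)"
proof -
  have "\<bar>sg p * w p * f p\<bar> \<le> B" if "p \<in> P" for p
  proof -
    have "\<bar>sg p * w p * f p\<bar> = \<bar>w p\<bar> * \<bar>f p\<bar>" using assms(1) that by (auto simp: abs_mult)
    also have "\<dots> \<le> 1 * B" using assms(2,3) that by (intro mult_mono) auto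
    finally show ?thesis by simp
  qed
  then show ?thesis
    using order.trans[OF sum_abs sum_bounded_above[of P "\<lambda>p. \<bar>sg p * w p * f p\<bar>" B]] by simp
qed

lemma gaussian_sum_minus_poly_P:
  "(\<Sum>p\<in>P. sg p * exp (2 * (norm p)\<^sup>2) * exp (- (1/3) * (norm (x - 3 *\<^sub>R p))\<^sup>2))
      - exp (- (1/3) * (norm x)\<^sup>2) * poly_P P sg rho x
    = exp (- (1/3) * (norm x)\<^sup>2) * (\<Sum>p\<in>P. sg p * exp (- (norm p)\<^sup>2)
        * (exp (2 * inner p x) - (\<Sum>k\<le>nat rho. (2 * inner p x)^k / fact k)))"
proof -
  have "(\<Sum>p\<in>P. sg p * exp (2 * (norm p)\<^sup>2) * exp (- (1/3) * (norm (x - 3 *\<^sub>R p))\<^sup>2))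
      = (\<Sum>p\<in>P. exp (- (1/3) * (norm x)\<^sup>2) * (sg p * exp (- (norm p)\<^sup>2) * exp (2 * inner p x)))"
    by (simp only: mult.assoc exp_norm_diff_scaleR_3) (simp add: ac_simps)
  then show ?thesis
    unfolding poly_P_eq_sum_taylor_exp
    by (simp add: sum_distrib_left sum_subtractf[symmetric] right_diff_distrib mult.assoc)
qed

lemma mult_exp_le_one:
  fixes a c t :: real
  assumes "a > 0" and "ln a + c \<le> t"
  shows "a * exp (- t) * exp c \<le> 1"
proof -
  have "a * exp (- t) * exp c = exp (ln a + c - t)"
    using assms(1) by (simp add: exp_add exp_diff exp_minus field_simps)
  also have "\<dots> \<le> exp 0" using assms(2) by simp
  finally show ?thesis by simp
qed

theorem mainTheorem4:
  fixes P :: "(real^'d) set" and sg :: "real^'d \<Rightarrow> real"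
    and n :: nat and rho :: int and x :: "real^'d"
  assumes "n \<ge> 2"
    and "finite P" and "card P = n" and "P \<subseteq> box_inf 1"
    and "\<forall>p\<in>P. sg p \<in> {-1, 1}"
    and "real_of_int rho + 1 \<ge>
           2 * exp 2 * real CARD('d) * (sqrt (3 * ln (real n)) + 3) + ln (real n) + 2 * real CARD('d)"
    and "x \<in> box_inf (sqrt (3 * ln (real n)) + 3)"
  shows "\<bar>(\<Sum>p\<in>P. sg p * exp (2 * (norm p)\<^sup>2) * exp (- (1/3) * (norm (x - 3 *\<^sub>R p))\<^sup>2))
           - exp (- (1/3) * (norm x)\<^sup>2) * poly_P P sg rho x\<bar> \<le> 1"
proof -
  define R where "R = sqrt (3 * ln (real n)) + 3"
  define dR where "dR = real CARD('d) * R"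
  define m where "m = Suc (nat rho)"
  define B where "B = exp (- real m) * exp (exp 1 * (2 * dR))"
  have ln_n: "ln (real n) \<ge> 0" using assms(1) by simp
  then have dR: "dR \<ge> 0" unfolding dR_def R_def by (simp add: add_nonneg_pos)
  then have "0 \<le> 2 * exp 2 * dR" by simp
  moreover have "real CARD('d) \<ge> 1" by simp
  ultimately have "real_of_int rho \<ge> 0"
    using assms(6) ln_n unfolding dR_def R_def mult.assoc by linarith
  then have m: "real m = real_of_int rho + 1" unfolding m_def by simp
  have tail: "\<forall>p\<in>P. \<bar>exp (2 * inner p x) - (\<Sum>k\<le>nat rho. (2 * inner p x)^k / fact k)\<bar> \<le> B"
  proof
    fix p assume "p \<in> P"
    then have "\<bar>inner p x\<bar> \<le> dR"
      using abs_inner_le_box_inf[of p 1 x R] assms(4,7) unfolding dR_def R_def by auto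
    then have "exp (exp 1 * \<bar>2 * inner p x\<bar>) \<le> exp (exp 1 * (2 * dR))"
      by (simp add: abs_mult)
    then show "\<bar>exp (2 * inner p x) - (\<Sum>k\<le>nat rho. (2 * inner p x)^k / fact k)\<bar> \<le> B"
      using exp_minus_taylor_abs_le[of "2 * inner p x" m]
      unfolding B_def m_def lessThan_Suc_atMost
      by (smt (verit) exp_gt_zero mult_left_mono)
  qed
  have "exp 1 * (2 * dR) \<le> exp 2 * (2 * dR)" using dR by (intro mult_right_mono) auto
  then have "ln (real n) + exp 1 * (2 * dR) \<le> real m"
    using assms(6) m unfolding dR_def R_def by (simp add: algebra_simps)
  then have "real n * B \<le> 1"
    unfolding B_def mult.assoc[symmetric] using assms(1) by (intro mult_exp_le_one) auto
  moreover have "\<bar>\<Sum>p\<in>P. sg p * exp (- (norm p)\<^sup>2)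
      * (exp (2 * inner p x) - (\<Sum>k\<le>nat rho. (2 * inner p x)^k / fact k))\<bar> \<le> real n * B"
    using abs_sum_signed_weighted_le[OF assms(5) _ tail] assms(3) by simp
  ultimately show ?thesis
    unfolding gaussian_sum_minus_poly_P abs_mult
    using mult_mono[of "\<bar>exp (- (1/3) * (norm x)\<^sup>2)\<bar>" 1] by fastforce
qed

end
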